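(* Let $\rho$ be a mixed memory over a set $Y$ of program variables and let $X\subseteq Y$. Let $\mathbf{u}$ be a fresh unentangled ghost of the same type as $X$ and define $\mathrm{separable}(X) := (X\equiv_q\mathbf{u})$. Then $\rho\models\mathrm{separable}(X)$ iff $\rho$ is $(X,Y\setminus X)$-separable.
   Context: Variables have types and are of three disjoint kinds: program variables, entangled ghosts, unentangled ghosts. $\ell^2[V]$ is the Hilbert space with orthonormal basis indexed by assignments on $V$; $\ell^2[V\cup W]\cong\ell^2[V]\otimes\ell^2[W]$. Mixed memories over $V$ are positive trace-class operators on $\ell^2[V]$; $\mathrm{tr}_W$ is partial trace. A mixed memory over $V\cup W$ is $(V,W)$-separable if it is a convergent sum $\sum_i\rho_i\otimes\rho_i'$ of mixed memories over $V$ and $W$. $\mathrm{supp}\,\rho$ is the closure of the range of $\rho$. A predicate over $V$ is a closed subspace of $\ell^2[V]$; predicates over different variable sets are identified if they agree after tensoring with the full spaces of missing variables. Quantum equality: for disjoint lists $W,W'\subseteq V$ of the same type $T$, let $\mathrm{SWAP}$ be the unitary with $\mathrm{SWAP}(|i\rangle_W\otimes|j\rangle_{W'}\otimes\psi'')=|j\rangle_W\otimes|i\rangle_{W'}\otimes\psi''$; then $W\equiv_q W'$ is the set of $\psi\in\ell^2[V]$ with $\mathrm{SWAP}\,\psi=\psi$. For program variables $X$, entangled ghosts $E$, unentangled ghosts $U$ and a predicate $A$ over $X\cup E\cup U$, a mixed memory $\rho$ over $X$ satisfies $A$ ($\rho\models A$) iff there exists an $(X\cup E,U)$-separable mixed memory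 $\rho^\circ$ over $X\cup E\cup U$ with $\mathrm{supp}\,\rho^\circ\subseteq A$ and $\mathrm{tr}_{E\cup U}\rho^\circ=\rho$. *)

theory Defs
  imports "HOL-Analysis.Analysis"
begin

text \<open>
  A set of variables V is represented by the
  type of its assignments; l2[V] is the space of square-summable functions on that type,
  and l2[V u W] = l2[V] (x) l2[W] becomes the product of index types.
  Operators on l2[V] are represented by their matrices in the computational basis,
  K x y = <x|rho|y>.
\<close>

definition is_ell2 :: "('a \<Rightarrow> complex) \<Rightarrow> bool" where
  "is_ell2 \<psi> \<longleftrightarrow> (\<lambda>x. (cmod (\<psi> x))\<^sup>2) summable_on UNIV"

definition ell2_norm :: "('a \<Rightarrow> complex) \<Rightarrow> real" where
  "ell2_norm \<psi> = sqrt (infsum (\<lambda>x. (cmod (\<psi> x))\<^sup>2) UNIV)"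

definition ell2_closure :: "('a \<Rightarrow> complex) set \<Rightarrow> ('a \<Rightarrow> complex) set" where
  "ell2_closure S = {\<phi>. is_ell2 \<phi> \<and> (\<forall>\<epsilon>>0. \<exists>\<psi>\<in>S. ell2_norm (\<lambda>x. \<phi> x - \<psi> x) < \<epsilon>)}"

definition op_apply :: "('a \<Rightarrow> 'a \<Rightarrow> complex) \<Rightarrow> ('a \<Rightarrow> complex) \<Rightarrow> ('a \<Rightarrow> complex)" where
  "op_apply K \<psi> = (\<lambda>x. infsum (\<lambda>y. K x y * \<psi> y) UNIV)"

text \<open>Mixed memory = positive trace-class operator: its matrix is positive semidefinite
  and the diagonal (the trace) is summable.\<close>
definition mixed_memory :: "('a \<Rightarrow> 'a \<Rightarrow> complex) \<Rightarrow> bool" where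
  "mixed_memory K \<longleftrightarrow>
     (\<forall>F \<psi>. finite F \<longrightarrow>
        Im (\<Sum>x\<in>F. \<Sum>y\<in>F. cnj (\<psi> x) * K x y * \<psi> y) = 0 \<and>
        Re (\<Sum>x\<in>F. \<Sum>y\<in>F. cnj (\<psi> x) * K x y * \<psi> y) \<ge> 0)
     \<and> (\<lambda>x. K x x) summable_on UNIV"

definition supp :: "('a \<Rightarrow> 'a \<Rightarrow> complex) \<Rightarrow> ('a \<Rightarrow> complex) set" where
  "supp K = ell2_closure {op_apply K \<psi> | \<psi>. is_ell2 \<psi>}"

definition tensor_op :: "('a \<Rightarrow> 'a \<Rightarrow> complex) \<Rightarrow> ('b \<Rightarrow> 'b \<Rightarrow> complex)
    \<Rightarrow> ('a \<times> 'b \<Rightarrow> 'a \<times> 'b \<Rightarrow> complex)" where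
  "tensor_op K L = (\<lambda>(a, b) (a', b'). K a a' * L b b')"

definition separable :: "('a \<times> 'b \<Rightarrow> 'a \<times> 'b \<Rightarrow> complex) \<Rightarrow> bool" where
  "separable \<sigma> \<longleftrightarrow>
     (\<exists>(\<rho>s :: nat \<Rightarrow> 'a \<Rightarrow> 'a \<Rightarrow> complex) (\<rho>s' :: nat \<Rightarrow> 'b \<Rightarrow> 'b \<Rightarrow> complex).
        (\<forall>i. mixed_memory (\<rho>s i) \<and> mixed_memory (\<rho>s' i)) \<and>
        (\<forall>p q. ((\<lambda>i. tensor_op (\<rho>s i) (\<rho>s' i) p q) has_sum \<sigma> p q) UNIV))"

text \<open>Satisfaction: program variables 'p, entangled ghosts 'e, unentangled ghosts 'u;
  the predicate A is a set of vectors over ('p x 'e) x 'u.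
  The partial trace over E u U is written out entrywise.\<close>
definition qsat :: "('p \<Rightarrow> 'p \<Rightarrow> complex) \<Rightarrow> (('p \<times> 'e) \<times> 'u \<Rightarrow> complex) set \<Rightarrow> bool" where
  "qsat \<rho> A \<longleftrightarrow>
     (\<exists>\<sigma> :: ('p \<times> 'e) \<times> 'u \<Rightarrow> ('p \<times> 'e) \<times> 'u \<Rightarrow> complex.
        mixed_memory \<sigma> \<and> separable \<sigma> \<and> supp \<sigma> \<subseteq> A \<and>
        (\<forall>p p'. ((\<lambda>(e, u). \<sigma> ((p, e), u) ((p', e), u)) has_sum \<rho> p p') UNIV))"

text \<open>SWAP of the program variables X (index type 'x) with the ghost u (same type 'x),
  acting on l2[X u (Y-X) u E u {u}], and the quantum equality X ==q u.\<close>
definition swap_Xu :: "(((('x \<times> 'r) \<times> 'e) \<times> 'x) \<Rightarrow> complex) \<Rightarrow> (((('x \<times> 'r) \<times> 'e) \<times> 'x) \<Rightarrow> complex)" where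
  "swap_Xu \<psi> = (\<lambda>(((x, r), e), u). \<psi> (((u, r), e), x))"

definition separable_pred :: "(((('x \<times> 'r) \<times> 'e) \<times> 'x) \<Rightarrow> complex) set" where
  "separable_pred = {\<psi>. is_ell2 \<psi> \<and> swap_Xu \<psi> = \<psi>}"

end

theory Submission
  imports Defs
begin

text \<open>
  Write \<open>\<sigma>\<close> for a witness of \<open>\<rho> \<Turnstile> X \<equiv>\<^sub>q u\<close>, i.e. an \<open>(X \<union> Y - X, u)\<close>-separable extension
  \<open>\<sigma> = \<Sum>\<^sub>i A\<^sub>i \<otimes> B\<^sub>i\<close> of \<open>\<rho>\<close> whose support consists of vectors invariant under swapping \<open>X\<close>
  with \<open>u\<close>.  The columns of \<open>\<sigma>\<close> lie in its support, so \<open>|a\<rangle> - |swap a\<rangle>\<close> is a null vector of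
  \<open>\<sigma>\<close>, hence of every positive summand \<open>A\<^sub>i \<otimes> B\<^sub>i\<close>.  A swap-invariant tensor product
  factorises, \<open>tr(B\<^sub>i) A\<^sub>i = W\<^sub>i \<otimes> V\<^sub>i\<close> across \<open>X\<close> and \<open>Y - X\<close>, and tracing out \<open>u\<close> shows
  \<open>\<rho> = \<Sum>\<^sub>i W\<^sub>i \<otimes> V\<^sub>i\<close>.

  Conversely, decomposing the \<open>X\<close>-factors of a separable \<open>\<rho>\<close> into rank-one kernels (by iterated
  Schur complements) gives \<open>\<rho> = \<Sum>\<^sub>n |v\<^sub>n\<rangle>\<langle>v\<^sub>n| \<otimes> \<tau>\<^sub>n\<close> with unit vectors \<open>v\<^sub>n\<close>, and
  \<open>\<sigma> = \<Sum>\<^sub>n |v\<^sub>n\<rangle>\<langle>v\<^sub>n| \<otimes> \<tau>\<^sub>n \<otimes> |v\<^sub>n\<rangle>\<langle>v\<^sub>n|\<close> is a swap-invariant separable extension.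
\<close>

section \<open>Positive semidefinite kernels\<close>

type_synonym 'a kernel = "'a \<Rightarrow> 'a \<Rightarrow> complex"

definition sesq_form :: "'a set \<Rightarrow> 'a kernel \<Rightarrow> ('a \<Rightarrow> complex) \<Rightarrow> ('a \<Rightarrow> complex) \<Rightarrow> complex" where
  "sesq_form F K \<phi> \<psi> = (\<Sum>x\<in>F. \<Sum>y\<in>F. cnj (\<phi> x) * K x y * \<psi> y)"

definition psd_kernel :: "'a kernel \<Rightarrow> bool" where
  "psd_kernel K \<longleftrightarrow>
     (\<forall>F \<psi>. finite F \<longrightarrow> Im (sesq_form F K \<psi> \<psi>) = 0 \<and> Re (sesq_form F K \<psi> \<psi>) \<ge> 0)"

definition ket :: "'a \<Rightarrow> 'a \<Rightarrow> complex" where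
  "ket a = (\<lambda>x. if x = a then 1 else 0)"

definition outer :: "('a \<Rightarrow> complex) \<Rightarrow> 'a kernel" where
  "outer v = (\<lambda>x y. v x * cnj (v y))"

lemma mixed_memory_iff_psd_kernel:
  "mixed_memory K \<longleftrightarrow> psd_kernel K \<and> (\<lambda>x. K x x) summable_on UNIV"
  unfolding mixed_memory_def psd_kernel_def sesq_form_def by blast

lemma psd_kernelD:
  assumes "psd_kernel K" "finite F"
  shows "Im (sesq_form F K \<psi> \<psi>) = 0" "Re (sesq_form F K \<psi> \<psi>) \<ge> 0"
  using assms unfolding psd_kernel_def by auto

lemma sesq_form_add_scaled:
  "sesq_form F K (\<lambda>x. \<phi> x + c * \<psi> x) (\<lambda>x. \<phi> x + c * \<psi> x) =
   sesq_form F K \<phi> \<phi> + c * sesq_form F K \<phi> \<psi> + cnj c * sesq_form F K \<psi> \<phi> + (c * cnj c) * sesq_form F K \<psi> \<psi>"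
  unfolding sesq_form_def
  by (simp add: sum_distrib_left sum.distrib[symmetric] ring_distribs mult_ac add_ac)

lemma sesq_form_add_scaled_right:
  "sesq_form F K \<phi> (\<lambda>x. \<psi>1 x + c * \<psi>2 x) = sesq_form F K \<phi> \<psi>1 + c * sesq_form F K \<phi> \<psi>2"
  unfolding sesq_form_def by (simp add: sum_distrib_left sum.distrib algebra_simps)

lemma psd_kernel_sesq_form_conj:
  assumes "psd_kernel K" "finite F"
  shows "sesq_form F K \<psi> \<phi> = cnj (sesq_form F K \<phi> \<psi>)"
proof -
  have "Im (sesq_form F K \<phi> \<phi> + c * sesq_form F K \<phi> \<psi> + cnj c * sesq_form F K \<psi> \<phi>
      + (c * cnj c) * sesq_form F K \<psi> \<psi>) = 0" for c
    using psd_kernelD(1)[OF assms, of "\<lambda>x. \<phi> x + c * \<psi> x"] by (simp only: sesq_form_add_scaled)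
  from this[of 1] this[of \<i>] psd_kernelD(1)[OF assms, of \<phi>] psd_kernelD(1)[OF assms, of \<psi>]
  show ?thesis by (simp add: complex_eq_iff)
qed

lemma quadratic_nonneg_imp_le:
  fixes a b d :: real
  assumes "\<And>t. a - 2 * t * b + t\<^sup>2 * b * d \<ge> 0" "b \<ge> 0" "d \<ge> 0"
  shows "b \<le> a * d"
proof -
  consider "b = 0" | "b > 0" "d = 0" | "b > 0" "d > 0"
    using assms(2,3) by linarith
  then show ?thesis
  proof cases
    case 1
    with assms(1)[of 0] assms(3) show ?thesis by simp
  next
    case 2
    with assms(1)[of "(a + 1) / (2 * b)"] show ?thesis by (simp add: field_simps)
  next
    case 3
    with assms(1)[of "1 / d"] show ?thesis by (simp add: field_simps power2_eq_square)
  qed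
qed

lemma psd_kernel_Cauchy_Schwarz:
  assumes "psd_kernel K" "finite F"
  shows "(cmod (sesq_form F K \<phi> \<psi>))\<^sup>2 \<le> Re (sesq_form F K \<phi> \<phi>) * Re (sesq_form F K \<psi> \<psi>)"
proof -
  define b where "b = sesq_form F K \<phi> \<psi>"
  have conj: "sesq_form F K \<psi> \<phi> = cnj b"
    unfolding b_def by (rule psd_kernel_sesq_form_conj[OF assms])
  have norm_sq: "cnj b * b = of_real ((cmod b)\<^sup>2)"
    by (metis complex_norm_square mult.commute)
  have "Re (sesq_form F K \<phi> \<phi>) - 2 * t * (cmod b)\<^sup>2 + t\<^sup>2 * (cmod b)\<^sup>2 * Re (sesq_form F K \<psi> \<psi>) \<ge> 0"
    for t :: real
  proof -
    \<comment> \<open>evaluate the form at \<open>\<phi> - t \<langle>\<psi>,\<phi>\<rangle> \<psi>\<close>\<close>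
    define c where "c = - (of_real t * cnj b)"
    have "sesq_form F K (\<lambda>x. \<phi> x + c * \<psi> x) (\<lambda>x. \<phi> x + c * \<psi> x) =
        sesq_form F K \<phi> \<phi> - of_real (2 * t) * (cnj b * b) + of_real (t\<^sup>2) * (cnj b * b) * sesq_form F K \<psi> \<psi>"
      unfolding sesq_form_add_scaled conj b_def[symmetric] c_def
      by (simp add: power2_eq_square algebra_simps)
    with psd_kernelD[OF assms, of "\<lambda>x. \<phi> x + c * \<psi> x"] psd_kernelD(1)[OF assms, of \<psi>]
    show ?thesis by (simp add: norm_sq)
  qed
  from quadratic_nonneg_imp_le[OF this _ psd_kernelD(2)[OF assms]]
  show ?thesis unfolding b_def by simp
qed

lemma sesq_form_ket_right:
  assumes "finite F" "b \<in> F"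
  shows "sesq_form F K \<phi> (ket b) = (\<Sum>x\<in>F. cnj (\<phi> x) * K x b)"
proof -
  have "(\<Sum>y\<in>F. cnj (\<phi> x) * K x y * ket b y) = cnj (\<phi> x) * K x b" for x
  proof -
    have "(\<Sum>y\<in>F. cnj (\<phi> x) * K x y * ket b y) = (\<Sum>y\<in>F. if y = b then cnj (\<phi> x) * K x b else 0)"
      unfolding ket_def by (intro sum.cong) auto
    with assms show ?thesis by simp
  qed
  then show ?thesis unfolding sesq_form_def by simp
qed

lemma sesq_form_ket_ket:
  assumes "finite F" "a \<in> F" "b \<in> F"
  shows "sesq_form F K (ket a) (ket b) = K a b"
proof -
  have "(\<Sum>x\<in>F. cnj (ket a x) * K x b) = (\<Sum>x\<in>F. if x = a then K a b else 0)"
    unfolding ket_def by (intro sum.cong) auto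
  with assms show ?thesis by (simp add: sesq_form_ket_right)
qed

lemma psd_kernel_diag:
  assumes "psd_kernel K"
  shows "K x x = of_real (Re (K x x))" "Re (K x x) \<ge> 0"
  using psd_kernelD[OF assms, of "{x}" "ket x"] sesq_form_ket_ket[of "{x}" x x K]
  by (auto simp: complex_eq_iff)

lemma psd_kernel_hermitian:
  assumes "psd_kernel K"
  shows "K y x = cnj (K x y)"
  using psd_kernel_sesq_form_conj[OF assms, of "{x, y}" "ket y" "ket x"]
  by (simp add: sesq_form_ket_ket)

lemma psd_kernel_entry_Cauchy_Schwarz:
  assumes "psd_kernel K"
  shows "(cmod (K x y))\<^sup>2 \<le> Re (K x x) * Re (K y y)"
  using psd_kernel_Cauchy_Schwarz[OF assms, of "{x, y}" "ket x" "ket y"]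
  by (simp add: sesq_form_ket_ket)

lemma psd_kernel_entry_le:
  assumes "psd_kernel K"
  shows "cmod (K x y) \<le> (Re (K x x) + Re (K y y)) / 2"
proof -
  define a b where "a = Re (K x x)" and "b = Re (K y y)"
  have "(cmod (K x y))\<^sup>2 \<le> a * b"
    unfolding a_def b_def by (rule psd_kernel_entry_Cauchy_Schwarz[OF assms])
  also have "a * b \<le> ((a + b) / 2)\<^sup>2"
  proof -
    have "((a + b) / 2)\<^sup>2 - a * b = ((a - b) / 2)\<^sup>2" by (simp add: power2_eq_square field_simps)
    then show ?thesis by (metis diff_ge_0_iff_ge zero_le_power2)
  qed
  finally have "(cmod (K x y))\<^sup>2 \<le> ((a + b) / 2)\<^sup>2" .
  moreover have "0 \<le> (a + b) / 2" using psd_kernel_diag(2)[OF assms] unfolding a_def b_def by simp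
  ultimately show ?thesis unfolding a_def b_def by (rule power2_le_imp_le)
qed

lemma psd_kernel_zero_diag:
  assumes "psd_kernel K" "Re (K x x) = 0"
  shows "K x y = 0" "K y x = 0"
proof -
  show "K x y = 0" using psd_kernel_entry_Cauchy_Schwarz[OF assms(1), of x y] assms(2) by simp
  then show "K y x = 0" using psd_kernel_hermitian[OF assms(1), of x y] by simp
qed

lemma sesq_form_zero_extension:
  assumes "finite F" "G \<subseteq> F"
  shows "sesq_form F K (\<lambda>x. if x \<in> G then \<phi> x else 0) (\<lambda>x. if x \<in> G then \<psi> x else 0)
       = sesq_form G K \<phi> \<psi>"
proof -
  have restrict: "(\<Sum>x\<in>F. if x \<in> G then f x else 0) = (\<Sum>x\<in>G. f x)" for f :: "_ \<Rightarrow> complex"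
    using sum.inter_restrict[OF assms(1), of f G] assms(2) by (simp add: Int_absorb1)
  have "(\<Sum>y\<in>F. cnj (if x \<in> G then \<phi> x else 0) * K x y * (if y \<in> G then \<psi> y else 0))
      = (if x \<in> G then (\<Sum>y\<in>G. cnj (\<phi> x) * K x y * \<psi> y) else 0)" for x
    by (cases "x \<in> G") (auto simp: restrict[symmetric] intro!: sum.cong)
  then show ?thesis unfolding sesq_form_def by (simp add: restrict)
qed

lemma sesq_form_outer:
  "sesq_form F (outer v) \<psi> \<psi> = (\<Sum>x\<in>F. cnj (\<psi> x) * v x) * cnj (\<Sum>x\<in>F. cnj (\<psi> x) * v x)"
  unfolding sesq_form_def outer_def by (simp add: sum_distrib_left sum_distrib_right cnj_sum mult_ac)

lemma sesq_form_diff: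
  "sesq_form F (\<lambda>x y. K x y - L x y) \<phi> \<psi> = sesq_form F K \<phi> \<psi> - sesq_form F L \<phi> \<psi>"
  unfolding sesq_form_def by (simp add: sum_subtractf algebra_simps)

lemma sesq_form_scale:
  "sesq_form F (\<lambda>x y. c * K x y) \<phi> \<psi> = c * sesq_form F K \<phi> \<psi>"
  unfolding sesq_form_def by (simp add: sum_distrib_left mult_ac)

lemma psd_kernel_outer: "psd_kernel (outer v)"
  unfolding psd_kernel_def sesq_form_outer
  by (metis Im_complex_of_real Re_complex_of_real complex_norm_square zero_le_power2)

lemma psd_kernel_scale:
  assumes "psd_kernel K" "c \<ge> 0"
  shows "psd_kernel (\<lambda>x y. of_real c * K x y)"
  unfolding psd_kernel_def sesq_form_scale using psd_kernelD[OF assms(1)] assms(2) by simp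

lemma psd_kernel_reindex:
  fixes f :: "'b \<Rightarrow> 'a"
  assumes "psd_kernel K" "inj f"
  shows "psd_kernel (\<lambda>x y. K (f x) (f y))"
  unfolding psd_kernel_def
proof (intro allI impI)
  fix F :: "'b set" and \<psi> :: "'b \<Rightarrow> complex"
  assume "finite F"
  have "sesq_form (f ` F) K (\<lambda>a. \<psi> (inv f a)) (\<lambda>a. \<psi> (inv f a)) = sesq_form F (\<lambda>x y. K (f x) (f y)) \<psi> \<psi>"
    unfolding sesq_form_def using assms(2)
    by (simp add: sum.reindex inj_on_subset[OF assms(2)])
  with psd_kernelD[OF assms(1), of "f ` F"] \<open>finite F\<close>
  show "Im (sesq_form F (\<lambda>x y. K (f x) (f y)) \<psi> \<psi>) = 0 \<and> 0 \<le> Re (sesq_form F (\<lambda>x y. K (f x) (f y)) \<psi> \<psi>)"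
    by (metis finite_imageI)
qed

lemma has_sum_sum_finite:
  fixes f :: "'j \<Rightarrow> 'i \<Rightarrow> 'c::topological_comm_monoid_add"
  assumes "finite J" "\<And>j. j \<in> J \<Longrightarrow> (f j has_sum s j) A"
  shows "((\<lambda>i. \<Sum>j\<in>J. f j i) has_sum (\<Sum>j\<in>J. s j)) A"
  using assms by (induction J rule: finite_induct) (auto intro: has_sum_add)

lemma has_sum_sesq_form:
  fixes T :: "'i \<Rightarrow> 'a kernel"
  assumes "\<And>p q. ((\<lambda>i. T i p q) has_sum S p q) UNIV" "finite F"
  shows "((\<lambda>i. sesq_form F (T i) \<phi> \<psi>) has_sum sesq_form F S \<phi> \<psi>) UNIV"
  unfolding sesq_form_def
  by (intro has_sum_sum_finite assms(2) has_sum_cmult_left has_sum_cmult_right assms(1))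

lemma psd_kernel_has_sum:
  fixes T :: "'i \<Rightarrow> 'a kernel"
  assumes "\<And>i. psd_kernel (T i)" "\<And>p q. ((\<lambda>i. T i p q) has_sum S p q) UNIV"
  shows "psd_kernel S"
  unfolding psd_kernel_def
proof (intro allI impI conjI)
  fix F :: "'a set" and \<psi>
  assume F: "finite F"
  have sum: "((\<lambda>i. sesq_form F (T i) \<psi> \<psi>) has_sum sesq_form F S \<psi> \<psi>) UNIV"
    by (rule has_sum_sesq_form[OF assms(2) F])
  have "((\<lambda>i. Im (sesq_form F (T i) \<psi> \<psi>)) has_sum 0) UNIV"
    using psd_kernelD(1)[OF assms(1) F] by simp
  with has_sum_Im[OF sum] show "Im (sesq_form F S \<psi> \<psi>) = 0"
    using has_sum_unique by blast
  show "Re (sesq_form F S \<psi> \<psi>) \<ge> 0"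
    using has_sum_nonneg[OF has_sum_Re[OF sum]] psd_kernelD(2)[OF assms(1) F] by blast
qed

section \<open>Unordered sums\<close>

lemma has_sum_term_le:
  fixes f :: "'a \<Rightarrow> real"
  assumes "(f has_sum s) A" "\<And>y. y \<in> A \<Longrightarrow> f y \<ge> 0" "x \<in> A"
  shows "f x \<le> s"
  using has_sum_mono_neutral[OF has_sum_finite[of "{x}" f] assms(1)] assms by auto

lemma nonneg_summable_on_prod:
  fixes f :: "'a \<Rightarrow> 'b \<Rightarrow> real"
  assumes "\<And>a b. f a b \<ge> 0" "\<And>a. (f a has_sum g a) UNIV" "g summable_on UNIV"
  shows "(\<lambda>(a, b). f a b) summable_on UNIV"
  using summable_on_SigmaI[where A = UNIV and B = "\<lambda>_. UNIV" and f = "\<lambda>(a, b). f a b"] assms by auto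

lemma nonneg_summable_on_prod_swap:
  fixes f :: "'a \<Rightarrow> 'b \<Rightarrow> real"
  assumes "\<And>a b. f a b \<ge> 0" "\<And>b. ((\<lambda>a. f a b) has_sum g b) UNIV" "g summable_on UNIV"
  shows "(\<lambda>(a, b). f a b) summable_on UNIV"
proof -
  have "(\<lambda>(b, a). f a b) summable_on UNIV"
    using nonneg_summable_on_prod[of "\<lambda>b a. f a b"] assms by blast
  then show ?thesis using summable_on_swap[of "\<lambda>(a, b). f a b" UNIV UNIV] by simp
qed

lemma has_sum_iterated_iff:
  fixes f :: "'a \<times> 'b \<Rightarrow> complex"
  assumes "f summable_on UNIV"
    and "\<And>a. ((\<lambda>b. f (a, b)) has_sum h a) UNIV"
    and "\<And>b. ((\<lambda>a. f (a, b)) has_sum k b) UNIV"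
  shows "(h has_sum s) UNIV \<longleftrightarrow> (k has_sum s) UNIV"
proof -
  have "(f has_sum infsum f UNIV) (UNIV \<times> UNIV)" using assms(1) by simp
  then have "((\<lambda>(b, a). f (a, b)) has_sum infsum f UNIV) (UNIV \<times> UNIV)"
    using has_sum_swap by blast
  then have "(k has_sum infsum f UNIV) UNIV"
    using has_sum_SigmaD[where A = UNIV and B = "\<lambda>_. UNIV"] assms(3) by fastforce
  moreover have "(h has_sum infsum f UNIV) UNIV"
    using has_sum_SigmaD[where A = UNIV and B = "\<lambda>_. UNIV", of f] assms(1,2) by simp
  ultimately show ?thesis using has_sum_unique by metis
qed

lemma summable_on_dominated:
  fixes f :: "'a \<Rightarrow> complex"
  assumes "g summable_on A" "\<And>x. x \<in> A \<Longrightarrow> cmod (f x) \<le> g x"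
  shows "f summable_on A"
  using abs_summable_summable Infinite_Sum.abs_summable_on_comparison_test'[OF assms] by blast

lemma psd_kernel_family_summable:
  fixes T :: "'i \<Rightarrow> 'a kernel"
  assumes "\<And>i. psd_kernel (T i)" "(\<lambda>i. Re (T i p p)) summable_on I" "(\<lambda>i. Re (T i q q)) summable_on I"
  shows "(\<lambda>i. T i p q) summable_on I"
proof (rule summable_on_dominated)
  show "(\<lambda>i. (Re (T i p p) + Re (T i q q)) / 2) summable_on I"
    using summable_on_cmult_left[OF summable_on_add[OF assms(2,3)], of "1 / 2"] by simp
qed (rule psd_kernel_entry_le[OF assms(1)])

lemma norm_mult_le_mean_square: "cmod a * cmod b \<le> ((cmod a)\<^sup>2 + (cmod b)\<^sup>2) / 2"
proof -
  have "0 \<le> (cmod a - cmod b)\<^sup>2" by simp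
  then show ?thesis by (simp add: power2_diff)
qed

lemma summable_on_support_enumerable:
  fixes f :: "'a \<Rightarrow> complex"
  assumes "f summable_on UNIV"
  shows "\<exists>e :: nat \<Rightarrow> 'a. {x. f x \<noteq> 0} \<subseteq> range e"
proof (cases "{x. f x \<noteq> 0} = {}")
  case False
  moreover have "countable {x. f x \<noteq> 0}"
    using summable_countable_complex[OF assms] by simp
  ultimately have "range (from_nat_into {x. f x \<noteq> 0}) = {x. f x \<noteq> 0}"
    by (rule range_from_nat_into)
  then show ?thesis by (metis order_refl)
qed simp

section \<open>Gram decompositions of positive kernels\<close>

definition schur_vec :: "'a kernel \<Rightarrow> 'a \<Rightarrow> 'a \<Rightarrow> complex" where
  "schur_vec K z = (\<lambda>x. K x z / of_real (sqrt (Re (K z z))))"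

definition schur_compl :: "'a kernel \<Rightarrow> 'a \<Rightarrow> 'a kernel" where
  "schur_compl K z = (\<lambda>x y. K x y - outer (schur_vec K z) x y)"

lemma psd_kernel_schur_compl:
  assumes K: "psd_kernel K"
  shows "psd_kernel (schur_compl K z)"
  unfolding psd_kernel_def
proof (intro allI impI)
  fix F :: "'a set" and \<psi>
  assume F: "finite F"
  define s where "s = (\<Sum>x\<in>F. cnj (\<psi> x) * schur_vec K z x)"
  define r where "r = Re (K z z)"
  define \<psi>' where "\<psi>' = (\<lambda>x. if x \<in> F then \<psi> x else 0)"
  have G: "finite (insert z F)" "F \<subseteq> insert z F" "z \<in> insert z F" using F by auto
  have "sesq_form (insert z F) K \<psi>' (ket z) = (\<Sum>x\<in>insert z F. if x \<in> F then cnj (\<psi> x) * K x z else 0)"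
    unfolding sesq_form_ket_right[OF G(1,3)] \<psi>'_def by (intro sum.cong) auto
  also have "\<dots> = (\<Sum>x\<in>F. cnj (\<psi> x) * K x z)"
    using sum.inter_restrict[OF G(1), of "\<lambda>x. cnj (\<psi> x) * K x z" F] G(2) by (simp add: Int_absorb1)
  finally have "(cmod (\<Sum>x\<in>F. cnj (\<psi> x) * K x z))\<^sup>2 \<le> Re (sesq_form F K \<psi> \<psi>) * r"
    using psd_kernel_Cauchy_Schwarz[OF K G(1), of \<psi>' "ket z"]
    unfolding \<psi>'_def sesq_form_zero_extension[OF G(1,2)] sesq_form_ket_ket[OF G(1,3,3)] r_def
    by simp
  moreover have "s = (\<Sum>x\<in>F. cnj (\<psi> x) * K x z) / of_real (sqrt r)"
    unfolding s_def schur_vec_def r_def by (simp add: sum_divide_distrib)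
  ultimately have s_le: "(cmod s)\<^sup>2 \<le> Re (sesq_form F K \<psi> \<psi>)"
    using psd_kernelD(2)[OF K F, of \<psi>] psd_kernel_diag(2)[OF K, of z]
    by (cases "r = 0") (simp_all add: r_def norm_divide power_divide divide_le_eq)
  have "sesq_form F (schur_compl K z) \<psi> \<psi> = sesq_form F K \<psi> \<psi> - of_real ((cmod s)\<^sup>2)"
    unfolding schur_compl_def sesq_form_diff sesq_form_outer s_def[symmetric]
    using complex_norm_square[of s] by simp
  then show "Im (sesq_form F (schur_compl K z) \<psi> \<psi>) = 0 \<and> 0 \<le> Re (sesq_form F (schur_compl K z) \<psi> \<psi>)"
    using psd_kernelD[OF K F, of \<psi>] s_le by simp
qed

lemma schur_compl_row_zero:
  assumes K: "psd_kernel K"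
  shows "schur_compl K z z y = 0"
proof (cases "Re (K z z) = 0")
  case True
  then show ?thesis
    using psd_kernel_zero_diag[OF K True] by (simp add: schur_compl_def outer_def schur_vec_def)
next
  case False
  define r where "r = Re (K z z)"
  have r: "r > 0" using False psd_kernel_diag(2)[OF K, of z] r_def by simp
  have "schur_vec K z z = of_real (r / sqrt r)"
    using psd_kernel_diag(1)[OF K, of z] unfolding schur_vec_def r_def by simp
  also have "\<dots> = of_real (sqrt r)" using r by (simp add: real_div_sqrt)
  finally have "schur_vec K z z * cnj (schur_vec K z y) = K z y"
    using r psd_kernel_hermitian[OF K, of z y] unfolding schur_vec_def r_def by simp
  then show ?thesis unfolding schur_compl_def outer_def by simp
qed

lemma schur_compl_zero_row:
  assumes "\<And>y. K x y = 0"
  shows "schur_compl K z x y = 0"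
  using assms by (simp add: schur_compl_def outer_def schur_vec_def)

lemma psd_kernel_finite_gram:
  assumes "finite F" "psd_kernel K"
  shows "\<exists>(c :: nat \<Rightarrow> 'a \<Rightarrow> complex) n. \<forall>x\<in>F. \<forall>y\<in>F. K x y = (\<Sum>k<n. outer (c k) x y)"
  using assms
proof (induction F arbitrary: K rule: finite_induct)
  case empty
  then show ?case by auto
next
  case (insert z F)
  obtain c and n :: nat where c: "\<forall>x\<in>F. \<forall>y\<in>F. schur_compl K z x y = (\<Sum>k<n. outer (c k) x y)"
    using insert.IH[OF psd_kernel_schur_compl[OF insert.prems]] by blast
  \<comment> \<open>cutting \<open>c k\<close> off outside \<open>F\<close> is harmless: row and column \<open>z\<close> of the Schur complement vanish\<close>
  define c' where "c' = (\<lambda>k. if k < n then (\<lambda>x. if x \<in> F then c k x else 0) else schur_vec K z)"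
  have zero: "schur_compl K z x y = 0" if "x = z \<or> y = z" for x y
  proof -
    have "schur_compl K z x z = cnj (schur_compl K z z x)"
      by (rule psd_kernel_hermitian[OF psd_kernel_schur_compl[OF insert.prems]])
    with that schur_compl_row_zero[OF insert.prems] show ?thesis by auto
  qed
  have "K x y = (\<Sum>k<Suc n. outer (c' k) x y)" if "x \<in> insert z F" "y \<in> insert z F" for x y
  proof -
    have "(\<Sum>k<Suc n. outer (c' k) x y) =
        (if x \<in> F \<and> y \<in> F then (\<Sum>k<n. outer (c k) x y) else 0) + outer (schur_vec K z) x y"
      unfolding c'_def outer_def by (auto intro!: sum.cong)
    moreover have "K x y = schur_compl K z x y + outer (schur_vec K z) x y"
      unfolding schur_compl_def by simp
    ultimately show ?thesis
      using that c zero[of x y] by (cases "x \<in> F \<and> y \<in> F") auto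
  qed
  then show ?case by blast
qed

lemma sesq_form_tensor_finite_gram:
  assumes "finite F1" "finite F2"
    and B: "\<forall>u\<in>F2. \<forall>u'\<in>F2. B u u' = (\<Sum>k<n. outer (b k) u u')"
  shows "sesq_form (F1 \<times> F2) (tensor_op A B) \<psi> \<psi> =
     (\<Sum>k<n. sesq_form F1 A (\<lambda>p. \<Sum>u\<in>F2. \<psi> (p, u) * cnj (b k u)) (\<lambda>p. \<Sum>u\<in>F2. \<psi> (p, u) * cnj (b k u)))"
proof -
  define h where "h = (\<lambda>k p u p' u'. cnj (\<psi> (p, u)) * b k u * A p p' * \<psi> (p', u') * cnj (b k u'))"
  have "sesq_form (F1 \<times> F2) (tensor_op A B) \<psi> \<psi> =
      (\<Sum>p\<in>F1. \<Sum>u\<in>F2. \<Sum>p'\<in>F1. \<Sum>u'\<in>F2. \<Sum>k<n. h k p u p' u')"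
    unfolding sesq_form_def sum.cartesian_product'
    using B by (intro sum.cong refl)
      (simp add: tensor_op_def h_def outer_def sum_distrib_left sum_distrib_right mult_ac)
  also have "\<dots> = (\<Sum>k<n. \<Sum>p\<in>F1. \<Sum>u\<in>F2. \<Sum>p'\<in>F1. \<Sum>u'\<in>F2. h k p u p' u')"
    by (simp only: sum.swap[where B = "{..<n}"])
  also have "\<dots> = (\<Sum>k<n. \<Sum>p\<in>F1. \<Sum>p'\<in>F1. \<Sum>u\<in>F2. \<Sum>u'\<in>F2. h k p u p' u')"
    by (intro sum.cong refl sum.swap)
  also have "\<dots> = (\<Sum>k<n. sesq_form F1 A (\<lambda>p. \<Sum>u\<in>F2. \<psi> (p, u) * cnj (b k u))
                                      (\<lambda>p. \<Sum>u\<in>F2. \<psi> (p, u) * cnj (b k u)))"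
    unfolding sesq_form_def h_def
    by (simp add: cnj_sum sum_distrib_left sum_distrib_right mult_ac)
  finally show ?thesis .
qed

lemma psd_kernel_tensor:
  assumes A: "psd_kernel A" and B: "psd_kernel B"
  shows "psd_kernel (tensor_op A B)"
  unfolding psd_kernel_def
proof (intro allI impI)
  fix F :: "('a \<times> 'b) set" and \<psi> :: "'a \<times> 'b \<Rightarrow> complex"
  assume F: "finite F"
  have fin: "finite (fst ` F)" "finite (snd ` F)" and sub: "F \<subseteq> fst ` F \<times> snd ` F"
    using F by force+
  obtain b and n :: nat where b: "\<forall>u\<in>snd ` F. \<forall>u'\<in>snd ` F. B u u' = (\<Sum>k<n. outer (b k) u u')"
    using psd_kernel_finite_gram[OF fin(2) B] by blast
  define \<psi>' where "\<psi>' = (\<lambda>x. if x \<in> F then \<psi> x else 0)"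
  have "sesq_form F (tensor_op A B) \<psi> \<psi> = sesq_form (fst ` F \<times> snd ` F) (tensor_op A B) \<psi>' \<psi>'"
    unfolding \<psi>'_def using sesq_form_zero_extension[OF _ sub] fin by simp
  also have "\<dots> = (\<Sum>k<n. sesq_form (fst ` F) A (\<lambda>p. \<Sum>u\<in>snd ` F. \<psi>' (p, u) * cnj (b k u))
                                           (\<lambda>p. \<Sum>u\<in>snd ` F. \<psi>' (p, u) * cnj (b k u)))"
    by (rule sesq_form_tensor_finite_gram[OF fin b])
  finally show "Im (sesq_form F (tensor_op A B) \<psi> \<psi>) = 0 \<and> 0 \<le> Re (sesq_form F (tensor_op A B) \<psi> \<psi>)"
    using psd_kernelD[OF A fin(1)] by (simp add: Im_sum Re_sum sum_nonneg)
qed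

primrec schur_iter :: "'a kernel \<Rightarrow> (nat \<Rightarrow> 'a) \<Rightarrow> nat \<Rightarrow> 'a kernel" where
  "schur_iter K e 0 = K"
| "schur_iter K e (Suc n) = schur_compl (schur_iter K e n) (e n)"

lemma psd_kernel_schur_iter: "psd_kernel K \<Longrightarrow> psd_kernel (schur_iter K e n)"
  by (induction n) (simp_all add: psd_kernel_schur_compl)

lemma schur_iter_decomp:
  "K x y = schur_iter K e n x y + (\<Sum>k<n. outer (schur_vec (schur_iter K e k) (e k)) x y)"
  by (induction n) (simp_all add: schur_compl_def)

lemma schur_iter_zero_row_mono:
  assumes "\<forall>y. schur_iter K e n x y = 0" "n \<le> m"
  shows "\<forall>y. schur_iter K e m x y = 0"
  using assms(2,1)
proof (induction m rule: dec_induct)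
  case (step m)
  then show ?case using schur_compl_zero_row[of "schur_iter K e m" x] by simp
qed simp

lemma schur_iter_eventually_zero_row:
  assumes "psd_kernel K" "{x. K x x \<noteq> 0} \<subseteq> range e"
  shows "\<exists>n. \<forall>y. schur_iter K e n x y = 0"
proof (cases "x \<in> range e")
  case True
  then obtain n where "x = e n" by blast
  then have "\<forall>y. schur_iter K e (Suc n) x y = 0"
    using schur_compl_row_zero[OF psd_kernel_schur_iter[OF assms(1)]] by simp
  then show ?thesis by blast
next
  case False
  then have "Re (K x x) = 0" using assms(2) by force
  then have "\<forall>y. schur_iter K e 0 x y = 0"
    using psd_kernel_zero_diag(1)[OF assms(1)] by simp
  then show ?thesis by blast
qed

text \<open>Successive Schur complements peel off the rows of the countable support one after the other.\<close>

lemma mixed_memory_outer_series: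
  assumes "mixed_memory K"
  shows "\<exists>c :: nat \<Rightarrow> 'a \<Rightarrow> complex. \<forall>x y. ((\<lambda>k. outer (c k) x y) has_sum K x y) UNIV"
proof -
  have K: "psd_kernel K" and tr: "(\<lambda>x. K x x) summable_on UNIV"
    using assms by (auto simp: mixed_memory_iff_psd_kernel)
  obtain e :: "nat \<Rightarrow> 'a" where e: "{x. K x x \<noteq> 0} \<subseteq> range e"
    using summable_on_support_enumerable[OF tr] by blast
  define c where "c k = schur_vec (schur_iter K e k) (e k)" for k
  have "(\<Sum>k<n. (cmod (c k x))\<^sup>2) \<le> Re (K x x)" for n x
    using arg_cong[OF schur_iter_decomp[of K x x e n], of Re]
      psd_kernel_diag(2)[OF psd_kernel_schur_iter[OF K], of e n x]
    by (simp add: c_def outer_def complex_norm_square[symmetric])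
  then have square_summable: "summable (\<lambda>k. (cmod (c k x))\<^sup>2)" for x
    by (intro summableI_nonneg_bounded) simp_all
  have abs_summable: "summable (\<lambda>k. norm (outer (c k) x y))" for x y
  proof (rule summable_comparison_test'[where N = 0])
    show "summable (\<lambda>k. ((cmod (c k x))\<^sup>2 + (cmod (c k y))\<^sup>2) / 2)"
      by (intro summable_divide summable_add square_summable)
    show "norm (norm (outer (c k) x y)) \<le> ((cmod (c k x))\<^sup>2 + (cmod (c k y))\<^sup>2) / 2" for k
      using norm_mult_le_mean_square[of "c k x" "c k y"] by (simp add: outer_def norm_mult)
  qed
  have "(\<lambda>k. outer (c k) x y) sums K x y" for x y
  proof -
    obtain n where n: "\<forall>y. schur_iter K e n x y = 0"
      using schur_iter_eventually_zero_row[OF K e] by blast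
    have "(\<Sum>k<m. outer (c k) x y) = K x y" if "m \<ge> n" for m
      using schur_iter_zero_row_mono[OF n that] schur_iter_decomp[of K x y e m] by (simp add: c_def)
    then show ?thesis
      unfolding sums_def by (intro tendsto_eventually) (auto simp: eventually_sequentially)
  qed
  then show ?thesis
    using norm_summable_imp_has_sum[OF abs_summable] by blast
qed

section \<open>\<open>\<ell>\<^sup>2\<close>-vectors and supports\<close>

lemma mixed_memory_diag_Re_summable:
  assumes "mixed_memory K"
  shows "(\<lambda>x. Re (K x x)) summable_on UNIV"
  using assms summable_on_Re by (auto simp: mixed_memory_iff_psd_kernel)

lemma is_ell2_ket: "is_ell2 (ket a)"
  unfolding is_ell2_def ket_def
  by (rule has_sum_imp_summable, rule has_sum_finite_neutralI[of "{a}"]) auto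

lemma op_apply_ket: "op_apply K (ket b) = (\<lambda>a. K a b)"
proof
  fix a
  have "((\<lambda>y. K a y * ket b y) has_sum K a b) UNIV"
    by (rule has_sum_finite_neutralI[of "{b}"]) (auto simp: ket_def)
  then show "op_apply K (ket b) a = K a b"
    unfolding op_apply_def by (rule infsumI)
qed

lemma ell2_norm_ge_point:
  assumes "is_ell2 f"
  shows "cmod (f z) \<le> ell2_norm f"
proof -
  have "(cmod (f z))\<^sup>2 \<le> infsum (\<lambda>x. (cmod (f x))\<^sup>2) UNIV"
    using assms unfolding is_ell2_def by (intro has_sum_term_le[OF has_sum_infsum]) auto
  then show ?thesis unfolding ell2_norm_def by (rule real_le_rsqrt)
qed

lemma is_ell2_diff:
  assumes "is_ell2 f" "is_ell2 g"
  shows "is_ell2 (\<lambda>x. f x - g x)"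
  unfolding is_ell2_def
proof (rule summable_on_comparison_test)
  show "(\<lambda>x. 2 * (cmod (f x))\<^sup>2 + 2 * (cmod (g x))\<^sup>2) summable_on UNIV"
    using assms unfolding is_ell2_def by (intro summable_on_add summable_on_cmult_right)
  show "(cmod (f x - g x))\<^sup>2 \<le> 2 * (cmod (f x))\<^sup>2 + 2 * (cmod (g x))\<^sup>2" for x
  proof -
    have "(cmod (f x - g x))\<^sup>2 \<le> (cmod (f x) + cmod (g x))\<^sup>2"
      by (intro power_mono norm_triangle_ineq4) simp
    also have "\<dots> \<le> 2 * (cmod (f x))\<^sup>2 + 2 * (cmod (g x))\<^sup>2"
      using norm_mult_le_mean_square[of "f x" "g x"] by (simp add: power2_sum)
    finally show ?thesis .
  qed
qed simp

lemma ell2_closure_mem: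
  assumes "is_ell2 \<phi>" "\<phi> \<in> S"
  shows "\<phi> \<in> ell2_closure S"
  using assms unfolding ell2_closure_def ell2_norm_def by (auto intro!: bexI[of _ \<phi>])

lemma ell2_closure_point_eq:
  assumes "\<phi> \<in> ell2_closure S" "\<And>\<psi>. \<psi> \<in> S \<Longrightarrow> is_ell2 \<psi> \<and> \<psi> a = \<psi> b"
  shows "\<phi> a = \<phi> b"
proof (rule ccontr)
  assume "\<phi> a \<noteq> \<phi> b"
  then have d: "cmod (\<phi> a - \<phi> b) > 0" by simp
  have "\<forall>\<epsilon>>0. \<exists>\<psi>\<in>S. ell2_norm (\<lambda>x. \<phi> x - \<psi> x) < \<epsilon>"
    using assms(1) unfolding ell2_closure_def by blast
  then obtain \<psi> where \<psi>: "\<psi> \<in> S" "ell2_norm (\<lambda>x. \<phi> x - \<psi> x) < cmod (\<phi> a - \<phi> b) / 2"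
    using d half_gt_zero by blast
  have ell: "is_ell2 (\<lambda>x. \<phi> x - \<psi> x)"
    using assms(1) assms(2)[OF \<psi>(1)] is_ell2_diff unfolding ell2_closure_def by blast
  have "\<phi> a - \<phi> b = (\<phi> a - \<psi> a) - (\<phi> b - \<psi> b)" using assms(2)[OF \<psi>(1)] by simp
  then have "cmod (\<phi> a - \<phi> b) \<le> cmod (\<phi> a - \<psi> a) + cmod (\<phi> b - \<psi> b)"
    by (metis norm_triangle_ineq4)
  also have "\<dots> < cmod (\<phi> a - \<phi> b)"
    using ell2_norm_ge_point[OF ell, of a] ell2_norm_ge_point[OF ell, of b] \<psi>(2) by simp
  finally show False by simp
qed

lemma mixed_memory_weighted_summable:
  assumes "mixed_memory K" "is_ell2 \<psi>"
  shows "(\<lambda>b. sqrt (Re (K b b)) * cmod (\<psi> b)) summable_on UNIV"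
proof -
  have diag: "Re (K b b) \<ge> 0" for b
    using assms(1) psd_kernel_diag(2) by (auto simp: mixed_memory_iff_psd_kernel)
  show ?thesis
  proof (rule summable_on_comparison_test)
    show "(\<lambda>b. (Re (K b b) + (cmod (\<psi> b))\<^sup>2) * (1 / 2)) summable_on UNIV"
      using assms(2) unfolding is_ell2_def
      by (intro summable_on_cmult_left summable_on_add mixed_memory_diag_Re_summable[OF assms(1)])
    show "sqrt (Re (K b b)) * cmod (\<psi> b) \<le> (Re (K b b) + (cmod (\<psi> b))\<^sup>2) * (1 / 2)" for b
    proof -
      have "0 \<le> (sqrt (Re (K b b)) - cmod (\<psi> b))\<^sup>2" by simp
      then show ?thesis using diag[of b] by (simp add: power2_diff)
    qed
  qed (simp add: diag)
qed

lemma mixed_memory_op_apply_le: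
  assumes "mixed_memory K" "is_ell2 \<psi>"
  shows "cmod (op_apply K \<psi> a) \<le> sqrt (Re (K a a)) * infsum (\<lambda>b. sqrt (Re (K b b)) * cmod (\<psi> b)) UNIV"
proof -
  have K: "psd_kernel K" using assms(1) by (simp add: mixed_memory_iff_psd_kernel)
  define g where "g b = sqrt (Re (K a a)) * (sqrt (Re (K b b)) * cmod (\<psi> b))" for b
  have dom: "cmod (K a b * \<psi> b) \<le> g b" for b
  proof -
    have "cmod (K a b) \<le> sqrt (Re (K a a)) * sqrt (Re (K b b))"
      using psd_kernel_entry_Cauchy_Schwarz[OF K, of a b] by (simp add: real_le_rsqrt flip: real_sqrt_mult)
    from mult_right_mono[OF this norm_ge_zero[of "\<psi> b"]] show ?thesis
      by (simp add: g_def norm_mult mult_ac)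
  qed
  have g: "g summable_on UNIV"
    unfolding g_def by (rule summable_on_cmult_right[OF mixed_memory_weighted_summable[OF assms]])
  have summable: "(\<lambda>b. cmod (K a b * \<psi> b)) summable_on UNIV"
    by (rule summable_on_comparison_test[OF g]) (use dom in auto)
  have "cmod (op_apply K \<psi> a) \<le> infsum (\<lambda>b. cmod (K a b * \<psi> b)) UNIV"
    unfolding op_apply_def by (rule norm_infsum_bound) (use summable in simp)
  also have "\<dots> \<le> infsum g UNIV"
    by (rule infsum_mono[OF summable g dom])
  also have "\<dots> = sqrt (Re (K a a)) * infsum (\<lambda>b. sqrt (Re (K b b)) * cmod (\<psi> b)) UNIV"
    unfolding g_def by (rule infsum_cmult_right[OF mixed_memory_weighted_summable[OF assms]])
  finally show ?thesis .
qed

lemma mixed_memory_op_apply_ell2: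
  assumes "mixed_memory K" "is_ell2 \<psi>"
  shows "is_ell2 (op_apply K \<psi>)"
  unfolding is_ell2_def
proof (rule summable_on_comparison_test)
  have K: "psd_kernel K" using assms(1) by (simp add: mixed_memory_iff_psd_kernel)
  define C where "C = infsum (\<lambda>b. sqrt (Re (K b b)) * cmod (\<psi> b)) UNIV"
  show "(\<lambda>a. Re (K a a) * C\<^sup>2) summable_on UNIV"
    by (rule summable_on_cmult_left[OF mixed_memory_diag_Re_summable[OF assms(1)]])
  show "(cmod (op_apply K \<psi> a))\<^sup>2 \<le> Re (K a a) * C\<^sup>2" for a
  proof -
    have "(cmod (op_apply K \<psi> a))\<^sup>2 \<le> (sqrt (Re (K a a)) * C)\<^sup>2"
      unfolding C_def by (rule power_mono[OF mixed_memory_op_apply_le[OF assms]]) simp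
    then show ?thesis using psd_kernel_diag(2)[OF K, of a] by (simp add: power_mult_distrib)
  qed
qed simp

lemma mixed_memory_supp_point_eq_iff:
  assumes "mixed_memory K"
  shows "(\<forall>\<phi>\<in>supp K. \<phi> a = \<phi> b) \<longleftrightarrow> (\<forall>c. K a c = K b c)"
proof
  assume eq: "\<forall>\<phi>\<in>supp K. \<phi> a = \<phi> b"
  show "\<forall>c. K a c = K b c"
  proof
    fix c
    have "(\<lambda>x. K x c) \<in> {op_apply K \<psi> | \<psi>. is_ell2 \<psi>}"
      by (auto intro!: exI[of _ "ket c"] simp: is_ell2_ket op_apply_ket)
    moreover have "is_ell2 (\<lambda>x. K x c)"
      using mixed_memory_op_apply_ell2[OF assms is_ell2_ket] by (simp add: op_apply_ket)
    ultimately have "(\<lambda>x. K x c) \<in> supp K"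
      unfolding supp_def by (rule ell2_closure_mem[rotated])
    from eq[rule_format, OF this] show "K a c = K b c" by simp
  qed
next
  assume eq: "\<forall>c. K a c = K b c"
  show "\<forall>\<phi>\<in>supp K. \<phi> a = \<phi> b"
  proof
    fix \<phi> assume "\<phi> \<in> supp K"
    then show "\<phi> a = \<phi> b"
      unfolding supp_def
    proof (rule ell2_closure_point_eq)
      fix \<psi> assume "\<psi> \<in> {op_apply K \<psi> | \<psi>. is_ell2 \<psi>}"
      then show "is_ell2 \<psi> \<and> \<psi> a = \<psi> b"
        using mixed_memory_op_apply_ell2[OF assms] eq by (auto simp: op_apply_def)
    qed
  qed
qed

section \<open>Mixed memories and partial traces\<close>

lemma mixed_memory_trace_real:
  assumes "mixed_memory K"
  shows "infsum (\<lambda>x. K x x) UNIV = of_real (Re (infsum (\<lambda>x. K x x) UNIV))"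
    and "Re (infsum (\<lambda>x. K x x) UNIV) \<ge> 0"
proof -
  have K: "psd_kernel K" and tr: "(\<lambda>x. K x x) summable_on UNIV"
    using assms by (auto simp: mixed_memory_iff_psd_kernel)
  have "((\<lambda>x. Im (K x x)) has_sum Im (infsum (\<lambda>x. K x x) UNIV)) UNIV"
    using tr by (intro has_sum_Im) simp
  moreover have "((\<lambda>x. Im (K x x)) has_sum 0) UNIV"
    using psd_kernel_diag(1)[OF K] by (metis Im_complex_of_real has_sum_0)
  ultimately show "infsum (\<lambda>x. K x x) UNIV = of_real (Re (infsum (\<lambda>x. K x x) UNIV))"
    using has_sum_unique by (metis complex_eq_iff Im_complex_of_real Re_complex_of_real)
  show "Re (infsum (\<lambda>x. K x x) UNIV) \<ge> 0"
    using tr psd_kernel_diag(2)[OF K] by (simp flip: infsum_Re add: infsum_nonneg)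
qed

lemma mixed_memory_zero: "mixed_memory (\<lambda>x y. 0)"
  unfolding mixed_memory_iff_psd_kernel psd_kernel_def sesq_form_def by simp

lemma mixed_memory_outer:
  assumes "(\<lambda>x. (cmod (v x))\<^sup>2) summable_on UNIV"
  shows "mixed_memory (outer v)"
  unfolding mixed_memory_iff_psd_kernel outer_def
  using psd_kernel_outer[of v] summable_on_of_real[OF assms, where 'a = complex]
  by (simp add: outer_def complex_norm_square del: of_real_power)

lemma mixed_memory_scale:
  assumes "mixed_memory K" "c \<ge> 0"
  shows "mixed_memory (\<lambda>x y. of_real c * K x y)"
  using assms psd_kernel_scale summable_on_cmult_right by (auto simp: mixed_memory_iff_psd_kernel)

lemma mixed_memory_reindex:
  assumes "mixed_memory K" "inj f"
  shows "mixed_memory (\<lambda>x y. K (f x) (f y))"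
proof -
  have "(\<lambda>a. K a a) summable_on range f"
    using assms(1) by (auto simp: mixed_memory_iff_psd_kernel intro: summable_on_subset_banach)
  then have "(\<lambda>x. K (f x) (f x)) summable_on UNIV"
    using summable_on_reindex[of f UNIV "\<lambda>a. K a a"] assms(2) by (simp add: o_def)
  with assms show ?thesis
    by (simp add: mixed_memory_iff_psd_kernel psd_kernel_reindex)
qed

lemma mixed_memory_tensor:
  assumes "mixed_memory A" "mixed_memory B"
  shows "mixed_memory (tensor_op A B)"
proof -
  have A: "psd_kernel A" and B: "psd_kernel B"
    using assms by (auto simp: mixed_memory_iff_psd_kernel)
  have "(\<lambda>(a, b). Re (A a a) * Re (B b b)) summable_on UNIV"
  proof (rule nonneg_summable_on_prod)
    show "((\<lambda>b. Re (A a a) * Re (B b b)) has_sum Re (A a a) * infsum (\<lambda>b. Re (B b b)) UNIV) UNIV" for a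
      using mixed_memory_diag_Re_summable[OF assms(2)] by (intro has_sum_cmult_right) simp
    show "(\<lambda>a. Re (A a a) * infsum (\<lambda>b. Re (B b b)) UNIV) summable_on UNIV"
      using mixed_memory_diag_Re_summable[OF assms(1)] by (rule summable_on_cmult_left)
  qed (simp add: psd_kernel_diag(2)[OF A] psd_kernel_diag(2)[OF B])
  then have "(\<lambda>z. complex_of_real ((\<lambda>(a, b). Re (A a a) * Re (B b b)) z)) summable_on UNIV"
    by (rule summable_on_of_real)
  moreover have "tensor_op A B z z = of_real ((\<lambda>(a, b). Re (A a a) * Re (B b b)) z)" for z
    using psd_kernel_diag(1)[OF A, of "fst z"] psd_kernel_diag(1)[OF B, of "snd z"]
    unfolding tensor_op_def by (simp add: case_prod_beta)
  ultimately have "(\<lambda>z. tensor_op A B z z) summable_on UNIV"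
    by simp
  with A B show ?thesis
    by (simp add: mixed_memory_iff_psd_kernel psd_kernel_tensor)
qed

definition has_partial_trace :: "('a \<times> 'b) kernel \<Rightarrow> 'a kernel \<Rightarrow> bool" where
  "has_partial_trace \<sigma> \<rho> \<longleftrightarrow> (\<forall>p q. ((\<lambda>b. \<sigma> (p, b) (q, b)) has_sum \<rho> p q) UNIV)"

lemma has_sum_unit_prod_iff:
  "(f has_sum s) (UNIV :: (unit \<times> 'a) set) \<longleftrightarrow> ((\<lambda>u. f ((), u)) has_sum s) UNIV"
proof -
  have "bij_betw (\<lambda>u. ((), u)) UNIV (UNIV :: (unit \<times> 'a) set)"
    by (auto simp: bij_betw_def inj_def image_def)
  from has_sum_reindex_bij_betw[OF this, of f s] show ?thesis by (simp add: o_def eq_commute)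
qed

lemma qsat_unit_iff:
  "qsat \<rho> (A :: (('p \<times> unit) \<times> 'u \<Rightarrow> complex) set) \<longleftrightarrow>
     (\<exists>\<sigma>. mixed_memory \<sigma> \<and> separable \<sigma> \<and> supp \<sigma> \<subseteq> A \<and> has_partial_trace \<sigma> (\<lambda>a b. \<rho> (fst a) (fst b)))"
proof -
  have "((\<lambda>(e, u). \<sigma> ((p, e), u) ((p', e), u)) has_sum \<rho> p p') UNIV \<longleftrightarrow>
      ((\<lambda>u. \<sigma> ((p, ()), u) ((p', ()), u)) has_sum \<rho> p p') UNIV" for \<sigma> :: "(('p \<times> unit) \<times> 'u) kernel" and p p'
    by (simp add: has_sum_unit_prod_iff)
  then show ?thesis
    unfolding qsat_def has_partial_trace_def by auto
qed

lemma separableE: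
  fixes \<sigma> :: "('a \<times> 'b) kernel"
  assumes "separable \<sigma>"
  obtains A :: "nat \<Rightarrow> 'a kernel" and B :: "nat \<Rightarrow> 'b kernel"
  where "\<And>i. mixed_memory (A i)" "\<And>i. mixed_memory (B i)"
    "\<And>p q. ((\<lambda>i. tensor_op (A i) (B i) p q) has_sum \<sigma> p q) UNIV"
  using assms unfolding separable_def by blast

lemma mixed_memory_of_partial_trace:
  assumes "psd_kernel \<sigma>" "has_partial_trace \<sigma> \<rho>" "mixed_memory \<rho>"
  shows "mixed_memory \<sigma>"
proof -
  have "(\<lambda>(p, b). Re (\<sigma> (p, b) (p, b))) summable_on UNIV"
  proof (rule nonneg_summable_on_prod)
    show "((\<lambda>b. Re (\<sigma> (p, b) (p, b))) has_sum Re (\<rho> p p)) UNIV" for p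
      using assms(2) unfolding has_partial_trace_def by (intro has_sum_Re) simp
  qed (use psd_kernel_diag(2)[OF assms(1)] mixed_memory_diag_Re_summable[OF assms(3)] in auto)
  then have "(\<lambda>a. Re (\<sigma> a a)) summable_on UNIV"
    by (simp add: case_prod_unfold)
  moreover have "cmod (\<sigma> a a) \<le> Re (\<sigma> a a)" for a
    using psd_kernel_diag[OF assms(1), of a] by (metis abs_of_nonneg norm_of_real order_refl)
  ultimately have "(\<lambda>a. \<sigma> a a) summable_on UNIV"
    by (rule summable_on_dominated)
  with assms(1) show ?thesis by (simp add: mixed_memory_iff_psd_kernel)
qed

lemma has_partial_trace_series_iff:
  fixes T :: "'i \<Rightarrow> ('a \<times> 'b) kernel"
  assumes psd: "\<And>i. psd_kernel (T i)"
    and diag: "\<And>p. (\<lambda>(i, b). Re (T i (p, b) (p, b))) summable_on UNIV"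
    and traces: "\<And>i. has_partial_trace (T i) (A i)"
    and sum: "\<And>a c. ((\<lambda>i. T i a c) has_sum S a c) UNIV"
  shows "(\<forall>p q. ((\<lambda>i. A i p q) has_sum R p q) UNIV) \<longleftrightarrow> has_partial_trace S R"
proof -
  have "(\<lambda>(i, b). T i (p, b) (q, b)) summable_on UNIV" for p q
  proof -
    have "psd_kernel (\<lambda>p q. T (fst j) (p, snd j) (q, snd j))" for j
      by (rule psd_kernel_reindex[OF psd, of "\<lambda>p. (p, snd j)"]) (simp add: inj_def)
    from psd_kernel_family_summable[OF this diag[of p, unfolded case_prod_beta] diag[of q, unfolded case_prod_beta]]
    show ?thesis by (simp add: case_prod_unfold)
  qed
  then have "((\<lambda>i. A i p q) has_sum R p q) UNIV \<longleftrightarrow> ((\<lambda>b. S (p, b) (q, b)) has_sum R p q) UNIV" for p q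
    by (rule has_sum_iterated_iff)
      (use traces sum in \<open>auto simp: has_partial_trace_def\<close>)
  then show ?thesis
    unfolding has_partial_trace_def by blast
qed

definition xu_swap :: "(('x \<times> 'r) \<times> 'e) \<times> 'x \<Rightarrow> (('x \<times> 'r) \<times> 'e) \<times> 'x" where
  "xu_swap = (\<lambda>(((x, r), e), u). (((u, r), e), x))"

lemma separable_pred_altdef:
  "separable_pred = {\<psi>. is_ell2 \<psi> \<and> (\<forall>a. \<psi> (xu_swap a) = \<psi> a)}"
  unfolding separable_pred_def swap_Xu_def xu_swap_def by (auto simp: fun_eq_iff)

lemma supp_subset_separable_pred_iff:
  assumes "mixed_memory \<sigma>"
  shows "supp \<sigma> \<subseteq> separable_pred \<longleftrightarrow> (\<forall>a c. \<sigma> (xu_swap a) c = \<sigma> a c)"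
proof -
  have "supp \<sigma> \<subseteq> Collect is_ell2"
    unfolding supp_def ell2_closure_def by blast
  then have "supp \<sigma> \<subseteq> separable_pred \<longleftrightarrow> (\<forall>a. \<forall>\<phi>\<in>supp \<sigma>. \<phi> (xu_swap a) = \<phi> a)"
    unfolding separable_pred_altdef by blast
  also have "\<dots> \<longleftrightarrow> (\<forall>a c. \<sigma> (xu_swap a) c = \<sigma> a c)"
    using mixed_memory_supp_point_eq_iff[OF assms] by blast
  finally show ?thesis .
qed

section \<open>Satisfying the quantum equality forces separability\<close>

lemma psd_kernel_summands_column_invariant:
  fixes T :: "'i \<Rightarrow> 'a kernel"
  assumes psd: "\<And>i. psd_kernel (T i)" and sum: "\<And>p q. ((\<lambda>i. T i p q) has_sum S p q) UNIV"
    and inv: "\<And>c. S b c = S a c"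
  shows "T i c b = T i c a"
proof -
  define F where "F = {a, b, c}"
  define v where "v z = ket a z + (-1) * ket b z" for z
  have F: "finite F" "a \<in> F" "b \<in> F" "c \<in> F" unfolding F_def by auto
  \<comment> \<open>\<open>v\<close> is a null vector of \<open>S\<close>, hence of every summand\<close>
  have "sesq_form F S v v = S a a - S a b - S b a + S b b"
    unfolding v_def sesq_form_add_scaled by (simp add: sesq_form_ket_ket F)
  then have "sesq_form F S v v = 0" using inv by simp
  then have "((\<lambda>j. Re (sesq_form F (T j) v v)) has_sum 0) UNIV"
    using has_sum_Re[OF has_sum_sesq_form[of T S, OF sum F(1), where \<phi> = v and \<psi> = v]] by simp
  then have "Re (sesq_form F (T i) v v) = 0"
    by (rule nonneg_has_sum_le_0D) (use psd_kernelD(2)[OF psd F(1)] in auto)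
  then have "sesq_form F (T i) (ket c) v = 0"
    using psd_kernel_Cauchy_Schwarz[OF psd[of i] F(1), of "ket c" v] by simp
  moreover have "sesq_form F (T i) (ket c) v = T i c a - T i c b"
    unfolding v_def sesq_form_add_scaled_right by (simp add: sesq_form_ket_ket F)
  ultimately show ?thesis by simp
qed

lemma tensor_op_xu_swap_invariant_entry:
  fixes A :: "(('x \<times> 'r) \<times> 'e) kernel" and B :: "'x kernel"
  assumes "psd_kernel A" "psd_kernel B"
    and inv: "\<And>a c. tensor_op A B c (xu_swap a) = tensor_op A B c a"
  shows "A ((x, r), e) ((x', r'), e') * (B u u * B u u) = A ((u, r), e) ((u, r'), e') * B x u * cnj (B x' u)"
proof -
  have psd: "psd_kernel (tensor_op A B)" by (rule psd_kernel_tensor[OF assms(1,2)])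
  have row_inv: "tensor_op A B (xu_swap a) c = tensor_op A B a c" for a c
    using inv[where a = a and c = c] psd_kernel_hermitian[OF psd, of c a]
      psd_kernel_hermitian[OF psd, of c "xu_swap a"]
    by simp
  \<comment> \<open>move \<open>u\<close> into the \<open>X\<close>-slot, first of the column index, then of the row index\<close>
  have "A ((x, r), e) ((x', r'), e') * (B u u * B u u) = A ((x, r), e) ((u, r'), e') * B u u * B u x'"
    using inv[where a = "(((x', r'), e'), u)" and c = "(((x, r), e), u)"]
    by (simp add: tensor_op_def xu_swap_def mult_ac)
  also have "\<dots> = A ((u, r), e) ((u, r'), e') * B x u * B u x'"
    using row_inv[where a = "(((x, r), e), u)" and c = "(((u, r'), e'), u)"]
    by (simp add: tensor_op_def xu_swap_def)
  finally show ?thesis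
    using psd_kernel_hermitian[OF assms(2), of u x'] by simp
qed

lemma mixed_memory_outer_column:
  assumes "mixed_memory B" "Re (B u u) > 0"
  shows "mixed_memory (outer (\<lambda>x. B x u / of_real (Re (B u u))))"
proof (rule mixed_memory_outer, rule summable_on_comparison_test)
  define \<beta> where "\<beta> = Re (B u u)"
  show "(\<lambda>x. Re (B x x) * (1 / \<beta>)) summable_on UNIV"
    using mixed_memory_diag_Re_summable[OF assms(1)] by (rule summable_on_cmult_left)
  show "(cmod (B x u / of_real \<beta>))\<^sup>2 \<le> Re (B x x) * (1 / \<beta>)" for x
  proof -
    have "(cmod (B x u / of_real \<beta>))\<^sup>2 = (cmod (B x u))\<^sup>2 / \<beta>\<^sup>2"
      using assms(2) by (simp add: \<beta>_def norm_divide power_divide)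
    also have "\<dots> \<le> Re (B x x) * \<beta> / \<beta>\<^sup>2"
      using psd_kernel_entry_Cauchy_Schwarz[of B x u] assms(1) unfolding \<beta>_def
      by (intro divide_right_mono) (simp_all add: mixed_memory_iff_psd_kernel)
    also have "\<dots> = Re (B x x) * (1 / \<beta>)"
      using assms(2) by (simp add: \<beta>_def power2_eq_square)
    finally show ?thesis .
  qed
qed simp

lemma tensor_factor_of_xu_swap_invariant:
  fixes A :: "(('x \<times> 'r) \<times> unit) kernel" and B :: "'x kernel"
  assumes A: "mixed_memory A" and B: "mixed_memory B"
    and inv: "\<And>a c. tensor_op A B c (xu_swap a) = tensor_op A B c a"
  shows "\<exists>W V. mixed_memory W \<and> mixed_memory V \<and>
           (\<forall>x r x' r'. infsum (\<lambda>u. B u u) UNIV * A ((x, r), ()) ((x', r'), ()) = W x x' * V r r')"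
proof -
  have psdA: "psd_kernel A" and psdB: "psd_kernel B"
    using A B by (simp_all add: mixed_memory_iff_psd_kernel)
  show ?thesis
  proof (cases "\<forall>u. Re (B u u) = 0")
    case True
    then have "infsum (\<lambda>u. B u u) UNIV = 0"
      using psd_kernel_zero_diag(1)[OF psdB] by simp
    then show ?thesis by (intro exI[of _ "\<lambda>x y. 0"]) (simp add: mixed_memory_zero)
  next
    case False
    then obtain u where "Re (B u u) \<noteq> 0" by blast
    define \<beta> where "\<beta> = Re (B u u)"
    have \<beta>: "\<beta> > 0" "B u u = of_real \<beta>"
      using \<open>Re (B u u) \<noteq> 0\<close> psd_kernel_diag[OF psdB, of u] unfolding \<beta>_def by auto
    define t where "t = Re (infsum (\<lambda>u. B u u) UNIV)"
    have trace: "infsum (\<lambda>u. B u u) UNIV = of_real t" "t \<ge> 0"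
      unfolding t_def by (rule mixed_memory_trace_real[OF B])+
    define w where "w x = B x u / of_real \<beta>" for x
    define V where "V r r' = of_real t * A ((u, r), ()) ((u, r'), ())" for r r'
    have "infsum (\<lambda>u. B u u) UNIV * A ((x, r), ()) ((x', r'), ()) = outer w x x' * V r r'" for x r x' r'
    proof -
      have "A ((x, r), ()) ((x', r'), ()) * (of_real \<beta> * of_real \<beta>)
          = A ((u, r), ()) ((u, r'), ()) * B x u * cnj (B x' u)"
        using tensor_op_xu_swap_invariant_entry[OF psdA psdB inv] \<beta>(2) by metis
      then show ?thesis
        using \<beta>(1) unfolding trace outer_def w_def V_def by (simp add: eq_divide_eq mult_ac)
    qed
    moreover have "mixed_memory (outer w)"
      unfolding w_def \<beta>_def by (rule mixed_memory_outer_column[OF B \<beta>(1)[unfolded \<beta>_def]])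
    moreover have "mixed_memory V"
      unfolding V_def
      by (intro mixed_memory_scale[OF mixed_memory_reindex[OF A]] trace(2)) (simp add: inj_def)
    ultimately show ?thesis by blast
  qed
qed

lemma has_partial_trace_tensor_series:
  fixes A :: "'i \<Rightarrow> 'a kernel" and B :: "'i \<Rightarrow> 'b kernel"
  assumes AB: "\<And>i. mixed_memory (A i)" "\<And>i. mixed_memory (B i)"
    and sum: "\<And>a c. ((\<lambda>i. tensor_op (A i) (B i) a c) has_sum \<sigma> a c) UNIV"
    and trace: "has_partial_trace \<sigma> \<rho>"
  shows "((\<lambda>i. infsum (\<lambda>u. B i u u) UNIV * A i p q) has_sum \<rho> p q) UNIV"
proof -
  have psd: "psd_kernel (tensor_op (A i) (B i))" for i
    using AB mixed_memory_tensor mixed_memory_iff_psd_kernel by blast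
  have traces: "has_partial_trace (tensor_op (A i) (B i)) (\<lambda>p q. infsum (\<lambda>u. B i u u) UNIV * A i p q)" for i
    unfolding has_partial_trace_def
  proof (intro allI)
    fix p q
    have "((\<lambda>u. B i u u) has_sum infsum (\<lambda>u. B i u u) UNIV) UNIV"
      using AB(2) by (simp add: mixed_memory_iff_psd_kernel)
    from has_sum_cmult_right[OF this, of "A i p q"]
    show "((\<lambda>u. tensor_op (A i) (B i) (p, u) (q, u)) has_sum infsum (\<lambda>u. B i u u) UNIV * A i p q) UNIV"
      by (simp add: tensor_op_def mult.commute)
  qed
  have diag: "(\<lambda>(i, u). Re (tensor_op (A i) (B i) (p, u) (p, u))) summable_on UNIV" for p
  proof (rule nonneg_summable_on_prod_swap)
    show "((\<lambda>i. Re (tensor_op (A i) (B i) (p, u) (p, u))) has_sum Re (\<sigma> (p, u) (p, u))) UNIV" for u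
      by (rule has_sum_Re[OF sum])
    show "(\<lambda>u. Re (\<sigma> (p, u) (p, u))) summable_on UNIV"
      using trace unfolding has_partial_trace_def by (metis has_sum_Re summable_on_def)
  qed (use psd_kernel_diag(2)[OF psd] in auto)
  from has_partial_trace_series_iff[OF psd diag traces sum, of \<rho>] trace show ?thesis
    by simp
qed

lemma separable_if_qsat_separable_pred:
  fixes \<rho> :: "('x \<times> 'r) kernel"
  assumes "qsat \<rho> (separable_pred :: ((('x \<times> 'r) \<times> unit) \<times> 'x \<Rightarrow> complex) set)"
  shows "separable \<rho>"
proof -
  obtain \<sigma> :: "((('x \<times> 'r) \<times> unit) \<times> 'x) kernel" where
    \<sigma>: "mixed_memory \<sigma>" "separable \<sigma>" "supp \<sigma> \<subseteq> separable_pred"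
    and trace: "has_partial_trace \<sigma> (\<lambda>a b. \<rho> (fst a) (fst b))"
    using assms unfolding qsat_unit_iff by blast
  obtain A :: "nat \<Rightarrow> (('x \<times> 'r) \<times> unit) kernel" and B :: "nat \<Rightarrow> 'x kernel"
    where AB: "\<And>i. mixed_memory (A i)" "\<And>i. mixed_memory (B i)"
      and sum: "\<And>a c. ((\<lambda>i. tensor_op (A i) (B i) a c) has_sum \<sigma> a c) UNIV"
    using \<sigma>(2) by (elim separableE) (rule that)
  have "psd_kernel (tensor_op (A i) (B i))" for i
    using AB mixed_memory_tensor mixed_memory_iff_psd_kernel by blast
  then have "tensor_op (A i) (B i) c (xu_swap a) = tensor_op (A i) (B i) c a" for i a c
    using psd_kernel_summands_column_invariant[of "\<lambda>i. tensor_op (A i) (B i)", OF _ sum]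
      \<sigma>(3) supp_subset_separable_pred_iff[OF \<sigma>(1)] by blast
  then have "\<forall>i. \<exists>W V. mixed_memory W \<and> mixed_memory V \<and>
      (\<forall>x r x' r'. infsum (\<lambda>u. B i u u) UNIV * A i ((x, r), ()) ((x', r'), ()) = W x x' * V r r')"
    using tensor_factor_of_xu_swap_invariant[OF AB] by blast
  then obtain W V where WV: "\<And>i. mixed_memory (W i)" "\<And>i. mixed_memory (V i)"
    and factor: "\<And>i x r x' r'. infsum (\<lambda>u. B i u u) UNIV * A i ((x, r), ()) ((x', r'), ()) = W i x x' * V i r r'"
    by metis
  have "((\<lambda>i. infsum (\<lambda>u. B i u u) UNIV * A i p q) has_sum \<rho> (fst p) (fst q)) UNIV" for p q
    by (rule has_partial_trace_tensor_series[OF AB sum trace])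
  then show ?thesis
    unfolding separable_def using WV factor by (auto simp: tensor_op_def intro!: exI[of _ W] exI[of _ V])
qed

section \<open>Symmetric extensions of separable memories\<close>

text \<open>The zero vector is sent to an arbitrary unit vector, which keeps
  \<open>outer c = \<parallel>c\<parallel>\<^sup>2 \<cdot> outer (ell2_normalize c)\<close> valid.\<close>

definition ell2_normalize :: "('a \<Rightarrow> complex) \<Rightarrow> 'a \<Rightarrow> complex" where
  "ell2_normalize c = (if ell2_norm c = 0 then ket undefined else (\<lambda>x. c x / of_real (ell2_norm c)))"

lemma ell2_norm_eq_0_iff:
  assumes "is_ell2 c"
  shows "ell2_norm c = 0 \<longleftrightarrow> c = (\<lambda>x. 0)"
proof
  assume "ell2_norm c = 0"
  then show "c = (\<lambda>x. 0)"
    using ell2_norm_ge_point[OF assms] by (metis norm_le_zero_iff)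
qed (simp add: ell2_norm_def)

lemma ell2_normalize_unit:
  assumes "is_ell2 c"
  shows "((\<lambda>x. (cmod (ell2_normalize c x))\<^sup>2) has_sum 1) UNIV"
proof (cases "ell2_norm c = 0")
  case True
  have "((\<lambda>x. (cmod (ket undefined x))\<^sup>2) has_sum 1) UNIV"
    by (rule has_sum_finite_neutralI[of "{undefined}"]) (auto simp: ket_def)
  with True show ?thesis
    unfolding ell2_normalize_def by simp
next
  case False
  have N: "((\<lambda>x. (cmod (c x))\<^sup>2) has_sum (ell2_norm c)\<^sup>2) UNIV"
    using assms infsum_nonneg[of UNIV "\<lambda>x. (cmod (c x))\<^sup>2"]
    unfolding is_ell2_def ell2_norm_def by simp
  from has_sum_cmult_left[OF N, of "1 / (ell2_norm c)\<^sup>2"] False show ?thesis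
    unfolding ell2_normalize_def by (simp add: norm_divide power_divide)
qed

lemma outer_ell2_normalize:
  assumes "is_ell2 c"
  shows "outer c x y = of_real ((ell2_norm c)\<^sup>2) * outer (ell2_normalize c) x y"
  using ell2_norm_eq_0_iff[OF assms]
  by (cases "ell2_norm c = 0") (auto simp: outer_def ell2_normalize_def field_simps power2_eq_square)

lemma has_sum_psd_kernel_double_series:
  fixes T :: "'i \<Rightarrow> 'k \<Rightarrow> 'a kernel"
  assumes psd: "\<And>i k. psd_kernel (T i k)"
    and inner: "\<And>i p q. ((\<lambda>k. T i k p q) has_sum S i p q) UNIV"
    and outer: "\<And>p q. ((\<lambda>i. S i p q) has_sum R p q) UNIV"
  shows "((\<lambda>(i, k). T i k p q) has_sum R p q) UNIV"
proof -
  have diag: "(\<lambda>(i, k). Re (T i k p p)) summable_on UNIV" for p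
  proof (rule nonneg_summable_on_prod)
    show "((\<lambda>k. Re (T i k p p)) has_sum Re (S i p p)) UNIV" for i
      by (rule has_sum_Re[OF inner])
    show "(\<lambda>i. Re (S i p p)) summable_on UNIV"
      using has_sum_Re[OF outer] by (rule has_sum_imp_summable)
  qed (rule psd_kernel_diag(2)[OF psd])
  have "(\<lambda>j. T (fst j) (snd j) p q) summable_on UNIV"
    using diag[of p] diag[of q] unfolding case_prod_unfold
    by (rule psd_kernel_family_summable[of "\<lambda>j. T (fst j) (snd j)", OF psd])
  then have "(\<lambda>(i, k). T i k p q) summable_on Sigma UNIV (\<lambda>_. UNIV)"
    by (simp add: case_prod_unfold)
  then have "((\<lambda>(i, k). T i k p q) has_sum R p q) (Sigma UNIV (\<lambda>_. UNIV))"
    by (intro has_sum_SigmaI[where g = "\<lambda>i. S i p q"]) (use inner outer in auto)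
  then show ?thesis by simp
qed

lemma is_ell2_outer_series:
  assumes "mixed_memory K" "\<And>x y. ((\<lambda>k. outer (c k) x y) has_sum K x y) UNIV"
  shows "is_ell2 (c k)"
  unfolding is_ell2_def
proof (rule summable_on_comparison_test)
  have "((\<lambda>k. (cmod (c k x))\<^sup>2) has_sum Re (K x x)) UNIV" for x
    using has_sum_Re[OF assms(2)[of x x]] by (simp add: outer_def flip: complex_norm_square)
  then show "(cmod (c k x))\<^sup>2 \<le> Re (K x x)" for x
    by (rule has_sum_term_le) auto
qed (simp_all add: mixed_memory_diag_Re_summable[OF assms(1)])

lemma separable_unit_outer_series:
  fixes \<rho> :: "('x \<times> 'r) kernel"
  assumes "separable \<rho>"
  obtains v :: "nat \<Rightarrow> 'x \<Rightarrow> complex" and \<tau> :: "nat \<Rightarrow> 'r kernel"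
  where "\<And>n. ((\<lambda>x. (cmod (v n x))\<^sup>2) has_sum 1) UNIV" "\<And>n. mixed_memory (\<tau> n)"
    "\<And>p q. ((\<lambda>n. tensor_op (outer (v n)) (\<tau> n) p q) has_sum \<rho> p q) UNIV"
proof -
  obtain A :: "nat \<Rightarrow> 'x kernel" and B :: "nat \<Rightarrow> 'r kernel" where AB: "\<And>i. mixed_memory (A i)" "\<And>i. mixed_memory (B i)"
    and sum: "\<And>p q. ((\<lambda>i. tensor_op (A i) (B i) p q) has_sum \<rho> p q) UNIV"
    using assms by (elim separableE) (rule that)
  have "\<forall>i. \<exists>c :: nat \<Rightarrow> 'x \<Rightarrow> complex. \<forall>x y. ((\<lambda>k. outer (c k) x y) has_sum A i x y) UNIV"
    using mixed_memory_outer_series[OF AB(1)] by blast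
  then obtain c :: "nat \<Rightarrow> nat \<Rightarrow> 'x \<Rightarrow> complex"
    where c: "\<And>i x y. ((\<lambda>k. outer (c i k) x y) has_sum A i x y) UNIV"
    by (auto dest!: choice)
  have ell2: "is_ell2 (c i k)" for i k
    by (rule is_ell2_outer_series[OF AB(1) c])
  define w where "w i k = ell2_normalize (c i k)" for i k
  define s where "s i k = (ell2_norm (c i k))\<^sup>2" for i k
  define T where "T i k = tensor_op (outer (c i k)) (B i)" for i k
  have psd: "psd_kernel (T i k)" for i k
    unfolding T_def using AB(2) psd_kernel_outer
    by (intro psd_kernel_tensor) (auto simp: mixed_memory_iff_psd_kernel)
  have inner: "((\<lambda>k. T i k p q) has_sum tensor_op (A i) (B i) p q) UNIV" for i p q
    unfolding T_def tensor_op_def by (simp add: case_prod_beta has_sum_cmult_left c)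
  have "((\<lambda>(i, k). T i k p q) has_sum \<rho> p q) UNIV" for p q
    using has_sum_psd_kernel_double_series[OF psd inner sum] .
  then have "((\<lambda>n. T (fst (prod_decode n)) (snd (prod_decode n)) p q) has_sum \<rho> p q) UNIV" for p q
    using has_sum_reindex_bij_betw[OF bij_prod_decode, of "\<lambda>j. T (fst j) (snd j) p q"]
    by (simp add: case_prod_unfold)
  moreover have "T i k = tensor_op (outer (w i k)) (\<lambda>r r'. of_real (s i k) * B i r r')" for i k
    unfolding T_def tensor_op_def w_def s_def
    by (simp add: outer_ell2_normalize[OF ell2] mult_ac fun_eq_iff)
  moreover have "mixed_memory (\<lambda>r r'. of_real (s i k) * B i r r')" for i k
    using mixed_memory_scale[OF AB(2), of "s i k" i] by (simp add: s_def)
  ultimately show thesis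
    using that[of "\<lambda>n. w (fst (prod_decode n)) (snd (prod_decode n))"
        "\<lambda>n r r'. of_real (s (fst (prod_decode n)) (snd (prod_decode n))) * B (fst (prod_decode n)) r r'"]
      ell2_normalize_unit[OF ell2] unfolding w_def
    by simp
qed

text \<open>The product term \<open>|v\<rangle>\<langle>v| \<otimes> \<tau>\<close> with its \<open>X\<close>-part \<open>v\<close> copied into the ghost \<open>u\<close>.\<close>

definition ghost_copy :: "('x \<Rightarrow> complex) \<Rightarrow> 'r kernel \<Rightarrow> ((('x \<times> 'r) \<times> unit) \<times> 'x) kernel" where
  "ghost_copy v \<tau> = tensor_op (\<lambda>a b. tensor_op (outer v) \<tau> (fst a) (fst b)) (outer v)"

lemma mixed_memory_ghost_copy_factor:
  assumes "(\<lambda>x. (cmod (v x))\<^sup>2) summable_on UNIV" "mixed_memory \<tau>"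
  shows "mixed_memory (\<lambda>a b :: ('x \<times> 'r) \<times> unit. tensor_op (outer v) \<tau> (fst a) (fst b))"
  by (rule mixed_memory_reindex[OF mixed_memory_tensor[OF mixed_memory_outer[OF assms(1)] assms(2)]])
    (simp add: inj_def)

lemma has_partial_trace_ghost_copy:
  assumes "((\<lambda>x. (cmod (v x))\<^sup>2) has_sum 1) UNIV"
  shows "has_partial_trace (ghost_copy v \<tau>) (\<lambda>a b. tensor_op (outer v) \<tau> (fst a) (fst b))"
proof -
  have "((\<lambda>u. outer v u u) has_sum 1) UNIV"
    using has_sum_of_real[OF assms, where 'a = complex]
    by (simp add: outer_def complex_norm_square del: of_real_power)
  then show ?thesis
    unfolding has_partial_trace_def ghost_copy_def tensor_op_def
    using has_sum_cmult_right by fastforce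
qed

lemma ghost_copy_diag_le:
  assumes "((\<lambda>x. (cmod (v x))\<^sup>2) has_sum 1) UNIV" "psd_kernel \<tau>"
  shows "Re (ghost_copy v \<tau> a a) \<le> Re (tensor_op (outer v) \<tau> (fst (fst a)) (fst (fst a)))"
proof -
  have "(cmod (v (snd a)))\<^sup>2 \<le> 1"
    using has_sum_term_le[OF assms(1)] by auto
  moreover have "Re (ghost_copy v \<tau> a a) = Re (tensor_op (outer v) \<tau> (fst (fst a)) (fst (fst a))) * (cmod (v (snd a)))\<^sup>2"
    unfolding ghost_copy_def tensor_op_def outer_def case_prod_beta complex_norm_square[symmetric]
    by simp
  moreover have "Re (tensor_op (outer v) \<tau> (fst (fst a)) (fst (fst a))) \<ge> 0"
    using psd_kernel_diag(2)[OF psd_kernel_tensor[OF psd_kernel_outer assms(2)]] .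
  ultimately show ?thesis by (simp add: mult_left_le)
qed

lemma ghost_copy_xu_swap: "ghost_copy v \<tau> (xu_swap a) c = ghost_copy v \<tau> a c"
  by (simp add: ghost_copy_def tensor_op_def outer_def xu_swap_def case_prod_beta mult_ac)

lemma psd_kernel_ghost_copy:
  assumes "psd_kernel \<tau>"
  shows "psd_kernel (ghost_copy v \<tau>)"
  unfolding ghost_copy_def
  by (intro psd_kernel_tensor psd_kernel_outer psd_kernel_reindex[OF psd_kernel_tensor[OF psd_kernel_outer assms]])
    (simp add: inj_def)

context
  fixes \<rho> :: "('x \<times> 'r) kernel" and v :: "nat \<Rightarrow> 'x \<Rightarrow> complex" and \<tau> :: "nat \<Rightarrow> 'r kernel"
  assumes v: "\<And>n. ((\<lambda>x. (cmod (v n x))\<^sup>2) has_sum 1) UNIV" and \<tau>: "\<And>n. mixed_memory (\<tau> n)"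
    and sum: "\<And>p q. ((\<lambda>n. tensor_op (outer (v n)) (\<tau> n) p q) has_sum \<rho> p q) UNIV"
begin

lemma ghost_copy_series_psd: "psd_kernel (ghost_copy (v n) (\<tau> n))"
  using \<tau> by (intro psd_kernel_ghost_copy) (simp add: mixed_memory_iff_psd_kernel)

lemma ghost_copy_series_diag_summable:
  "(\<lambda>n. Re (tensor_op (outer (v n)) (\<tau> n) p p)) summable_on UNIV"
  using has_sum_Re[OF sum] by (rule has_sum_imp_summable)

lemma ghost_copy_series_summable: "(\<lambda>n. ghost_copy (v n) (\<tau> n) a b) summable_on UNIV"
proof -
  have re: "(\<lambda>n. Re (ghost_copy (v n) (\<tau> n) a a)) summable_on UNIV" for a
  proof (rule summable_on_comparison_test[OF ghost_copy_series_diag_summable[of "fst (fst a)"]])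
    show "Re (ghost_copy (v n) (\<tau> n) a a) \<le> Re (tensor_op (outer (v n)) (\<tau> n) (fst (fst a)) (fst (fst a)))" for n
      using ghost_copy_diag_le[OF v] \<tau> unfolding mixed_memory_iff_psd_kernel by blast
  qed (rule psd_kernel_diag(2)[OF ghost_copy_series_psd])
  show ?thesis
    by (rule psd_kernel_family_summable[OF ghost_copy_series_psd re re])
qed

lemma has_partial_trace_ghost_copy_series:
  assumes \<sigma>: "\<And>a b. ((\<lambda>n. ghost_copy (v n) (\<tau> n) a b) has_sum \<sigma> a b) UNIV"
  shows "has_partial_trace \<sigma> (\<lambda>a b. \<rho> (fst a) (fst b))"
proof -
  have diag: "(\<lambda>(n, u). Re (ghost_copy (v n) (\<tau> n) (p, u) (p, u))) summable_on UNIV" for p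
  proof (rule nonneg_summable_on_prod[OF _ _ ghost_copy_series_diag_summable[of "fst p"]])
    show "((\<lambda>u. Re (ghost_copy (v n) (\<tau> n) (p, u) (p, u))) has_sum Re (tensor_op (outer (v n)) (\<tau> n) (fst p) (fst p))) UNIV" for n
      using has_sum_Re has_partial_trace_ghost_copy[OF v] unfolding has_partial_trace_def by blast
  qed (rule psd_kernel_diag(2)[OF ghost_copy_series_psd])
  from has_partial_trace_series_iff[OF ghost_copy_series_psd diag has_partial_trace_ghost_copy[OF v] \<sigma>,
      of "\<lambda>a b. \<rho> (fst a) (fst b)"]
  show ?thesis using sum by simp
qed

lemma qsat_separable_pred_of_unit_outer_series:
  assumes "mixed_memory \<rho>"
  shows "qsat \<rho> (separable_pred :: ((('x \<times> 'r) \<times> unit) \<times> 'x \<Rightarrow> complex) set)"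
proof -
  define \<sigma> where "\<sigma> a b = infsum (\<lambda>n. ghost_copy (v n) (\<tau> n) a b) UNIV" for a b
  have \<sigma>: "((\<lambda>n. ghost_copy (v n) (\<tau> n) a b) has_sum \<sigma> a b) UNIV" for a b
    unfolding \<sigma>_def using ghost_copy_series_summable by simp
  have trace: "has_partial_trace \<sigma> (\<lambda>a b. \<rho> (fst a) (fst b))"
    by (rule has_partial_trace_ghost_copy_series[OF \<sigma>])
  have mm_\<sigma>: "mixed_memory \<sigma>"
    using mixed_memory_of_partial_trace[OF psd_kernel_has_sum[OF ghost_copy_series_psd \<sigma>] trace]
      mixed_memory_reindex[OF assms, of "fst :: ('x \<times> 'r) \<times> unit \<Rightarrow> 'x \<times> 'r"] by (simp add: inj_def)
  have "separable \<sigma>"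
    unfolding separable_def
  proof (intro exI conjI allI)
    have "(\<lambda>x. (cmod (v n x))\<^sup>2) summable_on UNIV" for n
      using v by (rule has_sum_imp_summable)
    then show "mixed_memory (\<lambda>a b :: ('x \<times> 'r) \<times> unit. tensor_op (outer (v n)) (\<tau> n) (fst a) (fst b))"
      and "mixed_memory (outer (v n))" for n
      using \<tau> by (auto intro: mixed_memory_ghost_copy_factor mixed_memory_outer)
  qed (use \<sigma> in \<open>simp add: ghost_copy_def\<close>)
  moreover have "supp \<sigma> \<subseteq> separable_pred"
    unfolding supp_subset_separable_pred_iff[OF mm_\<sigma>] \<sigma>_def by (simp add: ghost_copy_xu_swap)
  ultimately show ?thesis
    unfolding qsat_unit_iff using mm_\<sigma> trace by (intro exI[of _ \<sigma>]) simp
qed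

end

theorem lemma7:
  fixes \<rho> :: "'x \<times> 'r \<Rightarrow> 'x \<times> 'r \<Rightarrow> complex"
  assumes "mixed_memory \<rho>"
  shows "qsat \<rho> (separable_pred :: ((('x \<times> 'r) \<times> unit) \<times> 'x \<Rightarrow> complex) set)
           \<longleftrightarrow> separable \<rho>"
proof
  assume "separable \<rho>"
  then obtain v :: "nat \<Rightarrow> 'x \<Rightarrow> complex" and \<tau> :: "nat \<Rightarrow> 'r kernel"
    where v: "\<And>n. ((\<lambda>x. (cmod (v n x))\<^sup>2) has_sum 1) UNIV" and \<tau>: "\<And>n. mixed_memory (\<tau> n)"
      and sum: "\<And>p q. ((\<lambda>n. tensor_op (outer (v n)) (\<tau> n) p q) has_sum \<rho> p q) UNIV"
    by (elim separable_unit_outer_series) (rule that)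
  show "qsat \<rho> (separable_pred :: ((('x \<times> 'r) \<times> unit) \<times> 'x \<Rightarrow> complex) set)"
    by (rule qsat_separable_pred_of_unit_outer_series[OF v \<tau> sum assms])
qed (rule separable_if_qsat_separable_pred)

end
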